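(* Let $G=(V,E)$ be a finite, undirected, unweighted, connected graph with $n=|V|$ and let $S$ be its supergraph. The 2-Opt procedure on $S$ (described in the context) runs in time $O(n^4)$ when it searches for a Hamiltonian cycle of $S$ or for a Hamiltonian path of $S$ with a fixed starting vertex, and in time $O(n^5)$ when it searches for a Hamiltonian path of $S$ (trying every starting vertex).
   Context: $\mathrm{dist}(u,v)$ is the shortest-path distance in $G$; the supergraph $S$ is the complete weighted graph on $V=\{v_1,\dots,v_n\}$ with weights $w(u,v)=\mathrm{dist}(u,v)$. 2-Opt for cycles: start with the Hamiltonian cycle $(v_1,v_2,\dots,v_n,v_1)$, stored as a doubly linked list of edges. Repeat: scan pairs of cycle edges $(c_k,c_{k+1}),(c_j,c_{j+1})$ with $k<j$ in the current cyclic order $(c_1,\dots,c_n)$; at the first pair with $w(c_k,c_{k+1})+w(c_j,c_{j+1})>w(c_k,c_j)+w(c_{k+1},c_{j+1})$, replace these two edges by $(c_k,c_j)$ and $(c_{k+1},c_{j+1})$, reversing the segment between them, and restart the scan; stop when a full scan finds no such pair. 2-Opt for paths with fixed starting vertex $s$: the same procedure applied to the Hamiltonian path starting at $s$ followed by the remaining vertices in index order; for paths without fixed start, the fixed-start procedure is run for every starting vertex. Cost model (as assumed by the paper): initialization costs $O(n)$, and each weight comparison and each edge replacement/segment reversal in the linked list costs $O(1)$. *)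

theory Defs
  imports Main
begin

text \<open>Graph G: vertex set {0..<n} (vertex v_(i+1) is i), undirected edge relation E.\<close>

definition graph_ok :: "nat \<Rightarrow> (nat \<Rightarrow> nat \<Rightarrow> bool) \<Rightarrow> bool" where
  "graph_ok n E \<longleftrightarrow> (\<forall>u v. E u v \<longrightarrow> u < n \<and> v < n) \<and> (\<forall>u v. E u v \<longrightarrow> E v u)"

definition connected :: "nat \<Rightarrow> (nat \<Rightarrow> nat \<Rightarrow> bool) \<Rightarrow> bool" where
  "connected n E \<longleftrightarrow> (\<forall>u<n. \<forall>v<n. \<exists>k. (E ^^ k) u v)"

definition dist :: "(nat \<Rightarrow> nat \<Rightarrow> bool) \<Rightarrow> nat \<Rightarrow> nat \<Rightarrow> nat" where
  "dist E u v = (LEAST k. (E ^^ k) u v)"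

text \<open>Pairs of edge positions (0-indexed) scanned, in scan order. For cycles the edge at
  position j joins xs!j and xs!((j+1) mod n); for paths only positions j < n-1 are edges.\<close>
definition scan_pairs :: "bool \<Rightarrow> nat \<Rightarrow> (nat \<times> nat) list" where
  "scan_pairs cyc n = [(i, j). i \<leftarrow> [0..<n], j \<leftarrow> [Suc i..<(if cyc then n else n - 1)]]"

definition nxt :: "nat list \<Rightarrow> nat \<Rightarrow> nat" where
  "nxt xs j = xs ! (Suc j mod length xs)"

definition improving :: "(nat \<Rightarrow> nat \<Rightarrow> nat) \<Rightarrow> nat list \<Rightarrow> nat \<times> nat \<Rightarrow> bool" where
  "improving w xs p = (case p of (i, j) \<Rightarrow>
     w (xs ! i) (xs ! Suc i) + w (xs ! j) (nxt xs j) > w (xs ! i) (xs ! j) + w (xs ! Suc i) (nxt xs j))"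

text \<open>Replace edges (c_k,c_{k+1}),(c_j,c_{j+1}) by (c_k,c_j),(c_{k+1},c_{j+1}): reverse the segment.\<close>
definition two_opt_swap :: "nat list \<Rightarrow> nat \<times> nat \<Rightarrow> nat list" where
  "two_opt_swap xs p = (case p of (i, j) \<Rightarrow>
     take (Suc i) xs @ rev (drop (Suc i) (take (Suc j) xs)) @ drop (Suc j) xs)"

text \<open>two_opt_cost w cyc xs c: starting from tour/path xs, the 2-Opt procedure terminates,
  performing in total c unit-cost operations (weight comparisons plus edge replacements).\<close>
inductive two_opt_cost :: "(nat \<Rightarrow> nat \<Rightarrow> nat) \<Rightarrow> bool \<Rightarrow> nat list \<Rightarrow> nat \<Rightarrow> bool" where
  stop: "\<not> (\<exists>p \<in> set (scan_pairs cyc (length xs)). improving w xs p)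
         \<Longrightarrow> two_opt_cost w cyc xs (length (scan_pairs cyc (length xs)))"
| step: "\<lbrakk> ps = scan_pairs cyc (length xs); m < length ps; improving w xs (ps ! m);
           \<forall>m' < m. \<not> improving w xs (ps ! m');
           two_opt_cost w cyc (two_opt_swap xs (ps ! m)) c \<rbrakk>
         \<Longrightarrow> two_opt_cost w cyc xs (Suc m + 1 + c)"

definition init_cycle :: "nat \<Rightarrow> nat list" where
  "init_cycle n = [0..<n]"

definition init_path :: "nat \<Rightarrow> nat \<Rightarrow> nat list" where
  "init_path n s = s # filter (\<lambda>v. v \<noteq> s) [0..<n]"

end

theory Submission
  imports Defs "HOL-Library.Transitive_Closure_Table"
begin

text \<open>The weight of the current tour is a potential: every 2-Opt move strictly decreases it,
  because reversing the segment between the two removed edges changes the tour only in those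
  two edges. In the supergraph of a connected graph on \<open>n\<close> vertices all weights are below \<open>n\<close>,
  so the potential starts below \<open>n\<^sup>2\<close> and there are at most \<open>n\<^sup>2\<close> moves. Each move, like the
  final unsuccessful scan, costs at most one pass over the \<open>O(n\<^sup>2)\<close> scanned pairs, giving
  \<open>O(n\<^sup>4)\<close>; trying all \<open>n\<close> starting vertices multiplies this by \<open>n\<close>.\<close>

fun path_weight :: "('a \<Rightarrow> 'a \<Rightarrow> nat) \<Rightarrow> 'a list \<Rightarrow> nat" where
  "path_weight w (a # b # xs) = w a b + path_weight w (b # xs)"
| "path_weight w _ = 0"

definition tour_weight :: "('a \<Rightarrow> 'a \<Rightarrow> nat) \<Rightarrow> bool \<Rightarrow> 'a list \<Rightarrow> nat" where
  "tour_weight w cyc xs = path_weight w xs + (if cyc \<and> xs \<noteq> [] then w (last xs) (hd xs) else 0)"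

lemma path_weight_Cons:
  "path_weight w (a # xs) = (if xs = [] then 0 else w a (hd xs) + path_weight w xs)"
  by (cases xs) auto

lemma path_weight_append:
  "path_weight w (xs @ ys) =
     path_weight w xs + path_weight w ys + (if xs \<noteq> [] \<and> ys \<noteq> [] then w (last xs) (hd ys) else 0)"
  by (induction xs) (auto simp: path_weight_Cons)

lemma path_weight_rev:
  assumes "\<forall>a b. w a b = w b a"
  shows "path_weight w (rev xs) = path_weight w xs"
  by (induction xs) (auto simp: path_weight_append path_weight_Cons hd_rev last_rev assms)

lemma path_weight_le:
  assumes "set xs \<subseteq> A" and "\<And>a b. a \<in> A \<Longrightarrow> b \<in> A \<Longrightarrow> w a b \<le> D"
  shows "path_weight w xs \<le> (length xs - 1) * D"
  using assms(1)
proof (induction xs)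
  case (Cons a xs)
  then show ?case
    using assms(2) by (cases xs) (auto intro: add_mono)
qed simp

lemma tour_weight_le:
  assumes "set xs \<subseteq> A" and "\<And>a b. a \<in> A \<Longrightarrow> b \<in> A \<Longrightarrow> w a b \<le> D"
  shows "tour_weight w cyc xs \<le> length xs * D"
proof (cases "xs = []")
  case False
  then have "w (last xs) (hd xs) \<le> D"
    using assms by (simp add: subset_iff)
  moreover have "(length xs - 1) * D + D = length xs * D"
    using False by (cases xs) auto
  moreover have "path_weight w xs \<le> (length xs - 1) * D"
    using assms by (rule path_weight_le)
  ultimately show ?thesis
    by (simp add: tour_weight_def)
qed (simp add: tour_weight_def)

text \<open>\<open>hd (C @ A)\<close> is the successor of \<open>last B\<close> in the tour, also when \<open>C = []\<close> on a cycle.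
  The identity is stated additively to avoid truncated subtraction.\<close>
lemma tour_weight_reverse_segment:
  assumes "\<forall>a b. w a b = w b a" and "A \<noteq> []" "B \<noteq> []" "cyc \<or> C \<noteq> []"
  shows "tour_weight w cyc (A @ rev B @ C) + w (last A) (hd B) + w (last B) (hd (C @ A))
       = tour_weight w cyc (A @ B @ C) + w (last A) (last B) + w (hd B) (hd (C @ A))"
  using assms
  by (cases "C = []") (auto simp: tour_weight_def path_weight_append path_weight_rev hd_rev last_rev)

lemma set_scan_pairsD:
  "(i, j) \<in> set (scan_pairs cyc n) \<Longrightarrow> i < j \<and> j < n \<and> (cyc \<or> Suc j < n)"
  by (auto simp: scan_pairs_def split: if_splits)

lemma length_scan_pairs_le: "length (scan_pairs cyc n) \<le> n * n"
proof -
  have "length (scan_pairs cyc n) = (\<Sum>i\<leftarrow>[0..<n]. (if cyc then n else n - 1) - Suc i)"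
    by (simp add: scan_pairs_def length_concat comp_def)
  also have "\<dots> = (\<Sum>i<n. (if cyc then n else n - 1) - Suc i)"
    by (simp add: interv_sum_list_conv_sum_set_nat atLeast0LessThan)
  also have "\<dots> \<le> (\<Sum>i<n. n)"
    by (rule sum_mono) auto
  finally show ?thesis
    by simp
qed

lemma length_two_opt_swap:
  "i < j \<Longrightarrow> j < length xs \<Longrightarrow> length (two_opt_swap xs (i, j)) = length xs"
  by (simp add: two_opt_swap_def)

lemma tour_weight_two_opt_swap_less:
  assumes sym: "\<forall>a b. w a b = w b a"
    and scanned: "(i, j) \<in> set (scan_pairs cyc (length xs))" and "improving w xs (i, j)"
  shows "tour_weight w cyc (two_opt_swap xs (i, j)) < tour_weight w cyc xs"
proof -
  have ij: "i < j" "j < length xs" "cyc \<or> Suc j < length xs"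
    using set_scan_pairsD[OF scanned] by auto
  define A where "A = take (Suc i) xs"
  define B where "B = drop (Suc i) (take (Suc j) xs)"
  define C where "C = drop (Suc j) xs"
  have "take (Suc j) xs = A @ B"
    using ij(1) by (metis A_def B_def append_take_drop_id min_absorb1 less_imp_le Suc_le_mono take_take)
  then have xs: "xs = A @ B @ C"
    by (metis C_def append_assoc append_take_drop_id)
  have swap: "two_opt_swap xs (i, j) = A @ rev B @ C"
    by (simp add: two_opt_swap_def A_def B_def C_def)
  have "xs \<noteq> []"
    using ij by auto
  then have A: "A \<noteq> []" "last A = xs ! i" "hd A = xs ! 0"
    using ij by (auto simp: A_def last_conv_nth hd_conv_nth)
  have B: "B \<noteq> []" "hd B = xs ! Suc i" "last B = xs ! j"
    using ij by (auto simp: B_def hd_drop_conv_nth last_drop last_conv_nth nth_take)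
  have nxt: "nxt xs j = hd (C @ A)"
  proof (cases "Suc j < length xs")
    case True
    then show ?thesis
      by (simp add: nxt_def C_def hd_drop_conv_nth)
  next
    case False
    then have "Suc j = length xs" "C = []"
      using ij(2) by (auto simp: C_def)
    then show ?thesis
      using A(3) by (simp add: nxt_def)
  qed
  have "cyc \<or> C \<noteq> []"
    using ij(3) by (auto simp: C_def)
  from tour_weight_reverse_segment[OF sym A(1) B(1) this]
  have "tour_weight w cyc (A @ rev B @ C) + w (xs ! i) (xs ! Suc i) + w (xs ! j) (nxt xs j)
      = tour_weight w cyc xs + w (xs ! i) (xs ! j) + w (xs ! Suc i) (nxt xs j)"
    unfolding A(2) B(2,3) nxt[symmetric] xs[symmetric] .
  then show ?thesis
    using \<open>improving w xs (i, j)\<close> unfolding swap improving_def by simp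
qed

lemma two_opt_cost_tour_weight_bound:
  assumes sym: "\<forall>a b. w a b = w b a"
  shows "\<exists>c. two_opt_cost w cyc xs c \<and>
    c \<le> tour_weight w cyc xs * (length (scan_pairs cyc (length xs)) + 1)
         + length (scan_pairs cyc (length xs))"
proof (induction "tour_weight w cyc xs" arbitrary: xs rule: less_induct)
  case less
  define ps where "ps = scan_pairs cyc (length xs)"
  show ?case
  proof (cases "\<exists>p \<in> set ps. improving w xs p")
    case False
    then show ?thesis
      using two_opt_cost.stop[of cyc xs w] by (auto simp: ps_def)
  next
    case True
    then have "\<exists>m. m < length ps \<and> improving w xs (ps ! m)"
      by (metis in_set_conv_nth)
    then obtain m where m: "m < length ps" "improving w xs (ps ! m)"
      and "\<forall>m' < m. \<not> (m' < length ps \<and> improving w xs (ps ! m'))"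
      by (subst (asm) exists_least_iff) blast
    then have first: "\<forall>m' < m. \<not> improving w xs (ps ! m')"
      by auto
    obtain i j where ij: "ps ! m = (i, j)"
      by fastforce
    have scanned: "(i, j) \<in> set (scan_pairs cyc (length xs))"
      using m(1) ij nth_mem ps_def by metis
    define xs' where "xs' = two_opt_swap xs (i, j)"
    have weight_less: "tour_weight w cyc xs' < tour_weight w cyc xs"
      unfolding xs'_def using tour_weight_two_opt_swap_less[OF sym scanned] m(2) ij by simp
    have "length xs' = length xs"
      using set_scan_pairsD[OF scanned] by (simp add: xs'_def length_two_opt_swap)
    then obtain c' where c': "two_opt_cost w cyc xs' c'"
      "c' \<le> tour_weight w cyc xs' * (length ps + 1) + length ps"
      using less.hyps[OF weight_less] by (auto simp: ps_def)
    have "two_opt_cost w cyc xs (Suc m + 1 + c')"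
      using two_opt_cost.step[OF ps_def m first] c'(1) ij by (simp add: xs'_def)
    moreover have "(tour_weight w cyc xs' + 1) * (length ps + 1) \<le> tour_weight w cyc xs * (length ps + 1)"
      using weight_less by (intro mult_right_mono) auto
    ultimately show ?thesis
      using m(1) c'(2) by (intro exI[of _ "Suc m + 1 + c'"]) (auto simp: ps_def algebra_simps)
  qed
qed

lemma rtrancl_path_Cons_iff:
  "rtrancl_path E u (y # ys) v \<longleftrightarrow> E u y \<and> rtrancl_path E y ys v"
  by (auto elim: rtrancl_path.cases intro: rtrancl_path.step)

lemma relpowp_iff_rtrancl_path:
  "(E ^^ k) u v \<longleftrightarrow> (\<exists>xs. rtrancl_path E u xs v \<and> length xs = k)"
proof (induction k arbitrary: u)
  case 0
  then show ?case
    by (auto elim: rtrancl_path.cases intro: rtrancl_path.base)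
next
  case (Suc k)
  have "(E ^^ Suc k) u v \<longleftrightarrow> (\<exists>y. E u y \<and> (E ^^ k) y v)"
    by (metis relpowp_Suc_D2 relpowp_Suc_I2)
  also have "\<dots> \<longleftrightarrow> (\<exists>xs. rtrancl_path E u xs v \<and> length xs = Suc k)"
    unfolding Suc.IH by (metis length_Suc_conv rtrancl_path_Cons_iff)
  finally show ?case .
qed

lemma relpowp_symmetric:
  assumes "\<And>u v. E u v \<Longrightarrow> E v u"
  shows "(E ^^ k) u v \<Longrightarrow> (E ^^ k) v u"
proof (induction k arbitrary: u v)
  case (Suc k)
  from Suc.prems obtain y where "(E ^^ k) u y" "E y v"
    by (rule relpowp_Suc_E)
  then show ?case
    using Suc.IH assms by (blast intro: relpowp_Suc_I2)
qed simp

lemma dist_sym: "graph_ok n E \<Longrightarrow> dist E u v = dist E v u"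
  unfolding dist_def graph_ok_def by (metis relpowp_symmetric)

lemma dist_less:
  assumes g: "graph_ok n E" "connected n E" and "u < n" "v < n"
  shows "dist E u v < n"
proof -
  obtain k where "(E ^^ k) u v"
    using assms unfolding connected_def by blast
  then obtain xs where "rtrancl_path E u xs v"
    by (auto simp: relpowp_iff_rtrancl_path)
  then obtain ys where ys: "rtrancl_path E u ys v" "distinct (u # ys)"
    by (rule rtrancl_path_distinct)
  have "set (u # ys) \<subseteq> {..<n}"
    using rtrancl_path_Range[OF ys(1)] g(1) \<open>u < n\<close> by (auto simp: graph_ok_def)
  then have "card (set (u # ys)) \<le> n"
    using card_mono[of "{..<n}"] by simp
  then have "length (u # ys) \<le> n"
    by (simp only: distinct_card[OF ys(2)])
  moreover have "dist E u v \<le> length ys"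
    unfolding dist_def using ys(1) by (auto simp: relpowp_iff_rtrancl_path intro: Least_le)
  ultimately show ?thesis
    by simp
qed

lemma set_init_path: "s < n \<Longrightarrow> set (init_path n s) = {..<n}"
  by (auto simp: init_path_def)

lemma length_init_path:
  assumes "s < n"
  shows "length (init_path n s) = n"
proof -
  have "distinct (init_path n s)"
    by (simp add: init_path_def)
  then have "length (init_path n s) = card {..<n}"
    by (metis distinct_card set_init_path[OF assms])
  then show ?thesis
    by simp
qed

lemma two_opt_cost_dist_bound:
  assumes g: "graph_ok n E" "connected n E" and xs: "length xs = n" "set xs \<subseteq> {..<n}"
  shows "\<exists>c. two_opt_cost (dist E) cyc xs c \<and> n + c \<le> 4 * n ^ 4"
proof -
  have "\<forall>a b. dist E a b = dist E b a"
    using dist_sym[OF g(1)] by blast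
  from two_opt_cost_tour_weight_bound[OF this, of cyc xs]
  obtain c where c: "two_opt_cost (dist E) cyc xs c"
    "c \<le> tour_weight (dist E) cyc xs * (length (scan_pairs cyc n) + 1) + length (scan_pairs cyc n)"
    unfolding xs(1) by blast
  have "dist E a b \<le> n" if "a \<in> {..<n}" "b \<in> {..<n}" for a b
    using dist_less[OF g] that by (simp add: less_imp_le)
  with xs(2) have "tour_weight (dist E) cyc xs \<le> length xs * n"
    by (rule tour_weight_le)
  then have weight: "tour_weight (dist E) cyc xs \<le> n * n"
    unfolding xs(1) .
  note c(2)
  also have "tour_weight (dist E) cyc xs * (length (scan_pairs cyc n) + 1) + length (scan_pairs cyc n)
      \<le> n * n * (n * n + 1) + n * n"
    by (intro add_mono mult_le_mono) (simp_all add: weight length_scan_pairs_le)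
  finally have "c \<le> n * n * (n * n + 1) + n * n" .
  moreover have "n * n * (n * n + 1) + n * n = n ^ 4 + 2 * (n * n)"
    by (simp add: algebra_simps power4_eq_xxxx)
  moreover have "n \<le> n * n" "n * n \<le> n ^ 4"
    using le_square[of n] le_square[of "n * n"] by (simp_all add: power4_eq_xxxx mult.assoc)
  ultimately have "n + c \<le> 4 * n ^ 4"
    by linarith
  then show ?thesis
    using c(1) by blast
qed

theorem theorem2:
  "\<exists>C :: nat. \<forall>n E. graph_ok n E \<and> connected n E \<longrightarrow>
     (\<exists>c. two_opt_cost (dist E) True (init_cycle n) c \<and> n + c \<le> C * n ^ 4) \<and>
     (\<forall>s < n. \<exists>c. two_opt_cost (dist E) False (init_path n s) c \<and> n + c \<le> C * n ^ 4) \<and>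
     (\<exists>cs :: nat \<Rightarrow> nat. (\<forall>s < n. two_opt_cost (dist E) False (init_path n s) (cs s)) \<and>
        (\<Sum>s<n. n + cs s) \<le> C * n ^ 5)"
proof (rule exI[of _ 4], intro allI impI conjI)
  fix n E
  assume "graph_ok n E \<and> connected n E"
  then have bound: "\<exists>c. two_opt_cost (dist E) cyc xs c \<and> n + c \<le> 4 * n ^ 4"
    if "length xs = n" "set xs \<subseteq> {..<n}" for cyc xs
    using two_opt_cost_dist_bound that by blast
  show "\<exists>c. two_opt_cost (dist E) True (init_cycle n) c \<and> n + c \<le> 4 * n ^ 4"
    by (rule bound) (auto simp: init_cycle_def)
  show "\<exists>c. two_opt_cost (dist E) False (init_path n s) c \<and> n + c \<le> 4 * n ^ 4"
    if "s < n" for s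
    using that by (intro bound) (simp_all add: length_init_path set_init_path)
  then obtain cs where cs: "two_opt_cost (dist E) False (init_path n s) (cs s) \<and> n + cs s \<le> 4 * n ^ 4"
    if "s < n" for s
    by metis
  then have "(\<Sum>s<n. n + cs s) \<le> n * (4 * n ^ 4)"
    using sum_bounded_above[of "{..<n}" "\<lambda>s. n + cs s" "4 * n ^ 4"] by simp
  also have "\<dots> = 4 * n ^ 5"
    by (simp add: power_Suc[symmetric] del: power_Suc)
  finally show "\<exists>cs. (\<forall>s < n. two_opt_cost (dist E) False (init_path n s) (cs s)) \<and>
      (\<Sum>s<n. n + cs s) \<le> 4 * n ^ 5"
    using cs by blast
qed

end
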